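(* There is an absolute constant $C>0$ such that the following holds. Let $n\ge 2$, $L>0$, and let $f:[0,1]^n\to\mathbb{R}$ satisfy $|f(x)-f(y)|\le L\|x-y\|$ for all $x,y\in[0,1]^n$. Run the algorithm described in the context on $f$ for $T\ge 1$ queries, with values $f_t=f(P(x_t))$. Then the average regret satisfies $$r_T:=\frac1T\sum_{t=1}^T f_t-\min_{x\in[0,1]^n}f(x)\le C\,L\sqrt{n}\,T^{-1/n}.$$
   Context: Notation: $\|\cdot\|$ is the Euclidean norm; $\Omega=[0,1]^n$; $\theta=2^{1/n}$; $P:\mathbb{R}^n\to\Omega$ is the Euclidean projection onto $\Omega$ (coordinatewise clipping to $[0,1]$); $e_i$ is the $i$-th standard basis vector and $v(i)$ the $i$-th coordinate of $v$. The algorithm maintains a list of candidates, each a triple (center $x$, edge vector $v$, score $s$). Splitting rule: given an evaluated point $x_a$ with edge vector $v_a$ and value $f_a$, let $I$ be an index maximizing $v_a(i)$ over $i\in\{1,\dots,n\}$ (ties broken by smallest index), let $z=\tfrac{v_a(I)}{2}e_I$, and add to the list the two candidates $(x_a+z,\ v_a-z,\ f_a-L\|v_a\|)$ and $(x_a-z,\ v_a-z,\ f_a-L\|v_a\|)$. Initialization: $x_1=v_1=(\theta^{-1},\theta^{-2},\dots,\theta^{-n})$, $f_1=f(P(x_1))$, and apply the splitting rule to $(x_1,v_1,f_1)$. For each $t\ge 2$: remove from the list a candidate with the smallest score (ties arbitrary), call its center $x_t$ and edge vector $v_t$, evaluate $f_t=f(P(x_t))$, and apply the splitting rule to $(x_t,v_t,f_t)$.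 *)

theory Defs
  imports Complex_Main "HOL-Library.Multiset"
begin

text \<open>Vectors of R^n are represented as functions nat => real; coordinate i of the
paper (1..n) is index i-1 here (0..n-1). Coordinates >= n are irrelevant
(the algorithm keeps them 0).\<close>

type_synonym vec = "nat \<Rightarrow> real"
type_synonym cand = "vec \<times> vec \<times> real"  \<comment> \<open>(center, edge vector, score)\<close>

definition vnorm :: "nat \<Rightarrow> vec \<Rightarrow> real" where
  "vnorm n v = sqrt (\<Sum>i<n. (v i)^2)"

definition cube :: "nat \<Rightarrow> vec set" where
  "cube n = {x. (\<forall>i<n. 0 \<le> x i \<and> x i \<le> 1) \<and> (\<forall>i\<ge>n. x i = 0)}"

definition proj :: "nat \<Rightarrow> vec \<Rightarrow> vec" where
  "proj n x = (\<lambda>i. if i < n then max 0 (min 1 (x i)) else 0)"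

definition theta :: "nat \<Rightarrow> real" where
  "theta n = 2 powr (1 / real n)"

definition init_vec :: "nat \<Rightarrow> vec" where
  "init_vec n = (\<lambda>i. if i < n then theta n powr (- real (i + 1)) else 0)"

definition max_idx :: "nat \<Rightarrow> vec \<Rightarrow> nat" where
  "max_idx n v = (LEAST i. i < n \<and> (\<forall>j<n. v j \<le> v i))"

definition split_cands :: "nat \<Rightarrow> real \<Rightarrow> vec \<Rightarrow> vec \<Rightarrow> real \<Rightarrow> cand multiset" where
  "split_cands n L x v fv =
     (let I = max_idx n v;
          z = (\<lambda>j. if j = I then v I / 2 else 0);
          s = fv - L * vnorm n v
      in {# (\<lambda>j. x j + z j, \<lambda>j. v j - z j, s), (\<lambda>j. x j - z j, \<lambda>j. v j - z j, s) #})"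

text \<open>A run of the algorithm: Q t is the candidate list after step t (t >= 1),
X t = (x_t, v_t) is the evaluated point and its edge vector at step t.\<close>
definition is_run :: "nat \<Rightarrow> real \<Rightarrow> (vec \<Rightarrow> real) \<Rightarrow> (nat \<Rightarrow> cand multiset)
                      \<Rightarrow> (nat \<Rightarrow> vec \<times> vec) \<Rightarrow> bool" where
  "is_run n L f Q X \<longleftrightarrow>
     X 1 = (init_vec n, init_vec n) \<and>
     Q 1 = split_cands n L (init_vec n) (init_vec n) (f (proj n (init_vec n))) \<and>
     (\<forall>t\<ge>2. \<exists>s. (fst (X t), snd (X t), s) \<in># Q (t - 1) \<and>
                 (\<forall>c\<in>#Q (t - 1). s \<le> snd (snd c)) \<and>
                 Q t = Q (t - 1) - {# (fst (X t), snd (X t), s) #}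
                       + split_cands n L (fst (X t)) (snd (X t)) (f (proj n (fst (X t)))))"

end

theory Submission
  imports Defs
begin

text \<open>Every queued candidate carries the edge vector of its depth \<open>d\<close> (the number of splits
  above it), and its score is a lower bound for \<open>f\<close> on its box that lies at most
  \<open>2 L \<parallel>v\<parallel>\<close> below the value at its centre, \<open>v\<close> being the parent's edge vector. The boxes
  in the queue always cover the cube, so the smallest score is at most \<open>min f\<close>, and a point
  evaluated at depth \<open>k\<close> has regret at most \<open>2 L \<surd>n 2\<^sup>-\<^sup>k\<^sup>/\<^sup>n\<close>. Each evaluation at depth \<open>k\<close>
  queues two candidates of depth \<open>k + 1\<close>, so at most \<open>2\<^sup>k\<close> points are evaluated at depth \<open>k\<close>;
  summing over depths, \<open>T\<close> evaluations have total regret \<open>O(L \<surd>n T\<^sup>1\<^sup>-\<^sup>1\<^sup>/\<^sup>n)\<close>.\<close>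

definition side :: "nat \<Rightarrow> nat \<Rightarrow> real" where
  "side n k = 2 powr (- real k / real n)"

definition edge_exp :: "nat \<Rightarrow> nat \<Rightarrow> nat \<Rightarrow> nat" where
  "edge_exp n d i = d + 1 + nat ((int i - int d) mod int n)"

text \<open>Coordinate \<open>i\<close> starts with exponent \<open>i + 1\<close>; the split
  at depth \<open>d\<close> halves the largest coordinate \<open>d mod n\<close>, raising its exponent from \<open>d + 1\<close>
  to \<open>d + 1 + n\<close>.\<close>
definition edge_vec :: "nat \<Rightarrow> nat \<Rightarrow> vec" where
  "edge_vec n d = (\<lambda>i. if i < n then side n (edge_exp n d i) else 0)"

lemma side_pos: "0 < side n k"
  by (simp add: side_def)

lemma side_le_iff: "n > 0 \<Longrightarrow> side n a \<le> side n b \<longleftrightarrow> b \<le> a"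
  unfolding side_def by (simp add: divide_le_cancel)

lemma side_less_iff: "n > 0 \<Longrightarrow> side n a < side n b \<longleftrightarrow> b < a"
  unfolding side_def by (simp add: divide_less_cancel)

lemma side_0 [simp]: "side n 0 = 1"
  by (simp add: side_def)

lemma side_self: "n > 0 \<Longrightarrow> side n n = 1 / 2"
  by (simp add: side_def powr_minus)

lemma side_add_self:
  assumes "n > 0"
  shows "side n (k + n) = side n k / 2"
proof -
  have "(2::real) powr (- real (k + n) / real n) = 2 powr (- real k / real n - 1)"
    using assms by (simp add: field_simps)
  also have "\<dots> = 2 powr (- real k / real n) / 2"
    by (simp add: powr_diff)
  finally show ?thesis
    by (simp add: side_def)
qed

lemma side_eq_power: "side n k = side n 1 ^ k"
proof -
  have "side n 1 ^ k = side n 1 powr real k"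
    by (simp add: powr_realpow side_pos)
  also have "\<dots> = side n k"
    by (simp add: side_def powr_powr)
  finally show ?thesis ..
qed

lemma side_eq_powr: "side n k = real (2 ^ k) powr (- 1 / real n)"
proof -
  have "real (2 ^ k) powr (- 1 / real n) = (2 powr real k) powr (- 1 / real n)"
    by (simp add: powr_realpow)
  also have "\<dots> = side n k"
    by (simp add: side_def powr_powr)
  finally show ?thesis ..
qed

lemma side_one_ge:
  assumes "n \<ge> 2"
  shows "7 / 10 \<le> side n 1"
proof (rule ccontr)
  assume "\<not> 7 / 10 \<le> side n 1"
  then have "side n 1 ^ 2 < (7 / 10) ^ 2"
    by (intro power_strict_mono) (auto simp: side_pos less_imp_le)
  moreover have "side n n \<le> side n 2"
    using assms by (simp add: side_le_iff)
  ultimately show False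
    using assms side_self[of n] side_eq_power[of n 2] by (simp add: power2_eq_square)
qed

lemma edge_exp_ge: "d + 1 \<le> edge_exp n d i"
  by (simp add: edge_exp_def)

lemma edge_exp_eq_iff:
  assumes "n > 0" "i < n"
  shows "edge_exp n d i = d + 1 \<longleftrightarrow> i = d mod n"
proof -
  have "0 \<le> (int i - int d) mod int n"
    using assms by simp
  then have "edge_exp n d i = d + 1 \<longleftrightarrow> (int i - int d) mod int n = 0"
    by (simp add: edge_exp_def)
  also have "\<dots> \<longleftrightarrow> int i mod int n = int d mod int n"
    by (simp add: mod_eq_dvd_iff dvd_eq_mod_eq_0)
  also have "\<dots> \<longleftrightarrow> i = d mod n"
    using assms by (metis mod_less of_nat_eq_iff zmod_int)
  finally show ?thesis .
qed

lemma edge_exp_max: "n > 0 \<Longrightarrow> edge_exp n d (d mod n) = d + 1"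
  using edge_exp_eq_iff[of n "d mod n" d] by simp

lemma edge_exp_Suc_max:
  assumes "n > 0"
  shows "edge_exp n (Suc d) (d mod n) = d + 1 + n"
proof -
  have "int (Suc d) = int (d mod n) + 1 + int n * int (d div n)"
    by (metis add.commute add.left_commute div_mult_mod_eq mult.commute of_nat_Suc of_nat_add
        of_nat_mult)
  then have "int (d mod n) - int (Suc d) = -1 + (- int (d div n)) * int n"
    by (simp add: algebra_simps)
  then have "(int (d mod n) - int (Suc d)) mod int n = (-1) mod int n"
    by (simp only: mod_mult_self1)
  also have "\<dots> = int n - 1"
    using assms by (simp add: zmod_minus1)
  finally show ?thesis
    using assms by (simp add: edge_exp_def)
qed

lemma edge_exp_Suc_other:
  assumes "n > 0" "j < n" "j \<noteq> d mod n"
  shows "edge_exp n (Suc d) j = edge_exp n d j"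
proof -
  define r where "r = (int j - int d) mod int n"
  have "r \<noteq> 0"
    using edge_exp_eq_iff[OF assms(1,2), of d] assms(3) by (simp add: edge_exp_def r_def)
  moreover have "0 \<le> r" "r < int n"
    using assms by (auto simp: r_def)
  moreover have "(int j - int (Suc d)) mod int n = (r - 1) mod int n"
    unfolding r_def by (simp add: mod_diff_left_eq algebra_simps)
  ultimately show ?thesis
    by (simp add: edge_exp_def r_def[symmetric] mod_pos_pos_trivial)
qed

lemma edge_vec_nonneg: "0 \<le> edge_vec n d i"
  by (simp add: edge_vec_def side_pos less_imp_le)

lemma max_idx_edge_vec:
  assumes n: "n > 0"
  shows "max_idx n (edge_vec n d) = d mod n"
  unfolding max_idx_def
proof (rule Least_equality)
  show "d mod n < n \<and> (\<forall>j<n. edge_vec n d j \<le> edge_vec n d (d mod n))"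
    using n edge_exp_max[OF n] edge_exp_ge by (auto simp: edge_vec_def side_le_iff)
  fix i
  assume i: "i < n \<and> (\<forall>j<n. edge_vec n d j \<le> edge_vec n d i)"
  then have "edge_vec n d (d mod n) \<le> edge_vec n d i"
    using n by simp
  then have "edge_exp n d i \<le> d + 1"
    using n i edge_exp_max[OF n] by (simp add: edge_vec_def side_le_iff)
  then have "i = d mod n"
    using edge_exp_ge[of d n i] edge_exp_eq_iff[OF n, of i d] i by simp
  then show "d mod n \<le> i"
    by simp
qed

lemma edge_vec_Suc:
  assumes n: "n > 0"
  shows "edge_vec n (Suc d) =
    (\<lambda>j. edge_vec n d j - (if j = d mod n then edge_vec n d (d mod n) / 2 else 0))"
proof
  fix j
  show "edge_vec n (Suc d) j = edge_vec n d j - (if j = d mod n then edge_vec n d (d mod n) / 2 else 0)"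
  proof (cases "j = d mod n")
    case True
    then show ?thesis
      using n edge_exp_max[OF n] edge_exp_Suc_max[OF n] side_add_self[OF n, of "d + 1"]
      by (simp add: edge_vec_def)
  next
    case False
    then show ?thesis
      using n edge_exp_Suc_other[OF n, of j d] by (simp add: edge_vec_def)
  qed
qed

lemma edge_vec_strict_decrease:
  assumes n: "n > 0" and "d < d'"
  shows "edge_vec n d' (d mod n) < edge_vec n d (d mod n)"
  using assms edge_exp_ge[of d' n "d mod n"] edge_exp_max[OF n]
  by (simp add: edge_vec_def side_less_iff)

lemma edge_vec_inj:
  assumes n: "n > 0"
  shows "edge_vec n d = edge_vec n d' \<longleftrightarrow> d = d'"
  using edge_vec_strict_decrease[OF n, of d d'] edge_vec_strict_decrease[OF n, of d' d]
  by (metis less_irrefl linorder_neqE_nat)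

lemma init_vec_eq_edge_vec_0:
  assumes "n > 0"
  shows "init_vec n = edge_vec n 0"
proof
  fix i
  have "theta n powr (- real (i + 1)) = side n (i + 1)"
    unfolding theta_def side_def by (simp add: powr_powr)
  then show "init_vec n i = edge_vec n 0 i"
    by (simp add: init_vec_def edge_vec_def edge_exp_def)
qed

lemma edge_vec_0_ge_half:
  assumes n: "n > 0" and "i < n"
  shows "1 / 2 \<le> edge_vec n 0 i"
  using assms side_self[OF n] side_le_iff[OF n, of n "i + 1"]
  by (simp add: edge_vec_def edge_exp_def)

lemma vnorm_mono:
  assumes "\<And>i. i < n \<Longrightarrow> \<bar>a i\<bar> \<le> \<bar>b i\<bar>"
  shows "vnorm n a \<le> vnorm n b"
proof -
  have "(\<Sum>i<n. (a i)\<^sup>2) \<le> (\<Sum>i<n. (b i)\<^sup>2)"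
  proof (rule sum_mono)
    fix i
    assume "i \<in> {..<n}"
    then have "\<bar>a i\<bar>\<^sup>2 \<le> \<bar>b i\<bar>\<^sup>2"
      using assms by (intro power_mono) auto
    then show "(a i)\<^sup>2 \<le> (b i)\<^sup>2"
      by simp
  qed
  then show ?thesis
    unfolding vnorm_def by simp
qed

lemma vnorm_edge_vec_le:
  assumes n: "n > 0"
  shows "vnorm n (edge_vec n d) \<le> sqrt (real n) * side n (d + 1)"
proof -
  have "vnorm n (edge_vec n d) \<le> vnorm n (\<lambda>_. side n (d + 1))"
    using n edge_exp_ge by (intro vnorm_mono) (simp add: edge_vec_def side_pos side_le_iff less_imp_le)
  also have "\<dots> = sqrt (real n) * side n (d + 1)"
    by (simp add: vnorm_def real_sqrt_mult side_pos less_imp_le)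
  finally show ?thesis .
qed

lemma proj_in_cube: "proj n x \<in> cube n"
  by (simp add: proj_def cube_def)

lemma proj_cube_id: "y \<in> cube n \<Longrightarrow> proj n y = y"
  by (auto simp: proj_def cube_def)

lemma vnorm_proj_diff_le: "vnorm n (\<lambda>i. proj n a i - proj n b i) \<le> vnorm n (\<lambda>i. a i - b i)"
proof (rule vnorm_mono)
  fix i
  assume "i < n"
  have "\<bar>max 0 (min 1 (a i)) - max 0 (min 1 (b i))\<bar> \<le> \<bar>a i - b i\<bar>"
    by (simp add: max_def min_def)
  then show "\<bar>proj n a i - proj n b i\<bar> \<le> \<bar>a i - b i\<bar>"
    by (simp add: proj_def)
qed

definition lipschitz_on_cube :: "nat \<Rightarrow> real \<Rightarrow> (vec \<Rightarrow> real) \<Rightarrow> bool" where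
  "lipschitz_on_cube n L f \<longleftrightarrow>
     (\<forall>x\<in>cube n. \<forall>y\<in>cube n. \<bar>f x - f y\<bar> \<le> L * vnorm n (\<lambda>i. x i - y i))"

lemma lipschitz_on_cube_proj:
  assumes "lipschitz_on_cube n L f" "L \<ge> 0"
  shows "f (proj n a) - f (proj n b) \<le> L * vnorm n (\<lambda>i. a i - b i)"
proof -
  have "f (proj n a) - f (proj n b) \<le> L * vnorm n (\<lambda>i. proj n a i - proj n b i)"
    using assms(1) proj_in_cube unfolding lipschitz_on_cube_def by (meson abs_le_D1)
  also have "\<dots> \<le> L * vnorm n (\<lambda>i. a i - b i)"
    by (intro mult_left_mono vnorm_proj_diff_le assms(2))
  finally show ?thesis .
qed

definition in_box :: "nat \<Rightarrow> vec \<Rightarrow> vec \<Rightarrow> vec \<Rightarrow> bool" where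
  "in_box n x v y \<longleftrightarrow> (\<forall>i<n. \<bar>y i - x i\<bar> \<le> v i)"

lemma lipschitz_on_cube_box_lower:
  assumes "lipschitz_on_cube n L f" "L \<ge> 0" "y \<in> cube n" "in_box n x v y"
  shows "f (proj n x) - L * vnorm n v \<le> f y"
proof -
  have "f (proj n x) - f y \<le> L * vnorm n (\<lambda>i. x i - y i)"
    using lipschitz_on_cube_proj[OF assms(1,2), of x y] proj_cube_id[OF assms(3)] by simp
  also have "\<dots> \<le> L * vnorm n v"
    using assms(2,4) by (intro mult_left_mono vnorm_mono) (auto simp: in_box_def abs_minus_commute)
  finally show ?thesis
    by simp
qed

lemma in_box_halves:
  fixes I :: nat
  assumes y: "in_box n x v y"
  defines "z \<equiv> \<lambda>j. if j = I then v I / 2 else 0"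
  shows "in_box n (\<lambda>j. x j + z j) (\<lambda>j. v j - z j) y \<or> in_box n (\<lambda>j. x j - z j) (\<lambda>j. v j - z j) y"
proof (cases "x I \<le> y I")
  case True
  have "in_box n (\<lambda>j. x j + z j) (\<lambda>j. v j - z j) y"
    unfolding in_box_def
  proof (intro allI impI)
    fix i
    assume "i < n"
    then have "\<bar>y i - x i\<bar> \<le> v i"
      using y by (simp add: in_box_def)
    then show "\<bar>y i - (x i + z i)\<bar> \<le> v i - z i"
      using True by (cases "i = I") (auto simp: z_def split: abs_split)
  qed
  then show ?thesis ..
next
  case False
  have "in_box n (\<lambda>j. x j - z j) (\<lambda>j. v j - z j) y"
    unfolding in_box_def
  proof (intro allI impI)
    fix i
    assume "i < n"
    then have "\<bar>y i - x i\<bar> \<le> v i"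
      using y by (simp add: in_box_def)
    then show "\<bar>y i - (x i - z i)\<bar> \<le> v i - z i"
      using False by (cases "i = I") (auto simp: z_def split: abs_split)
  qed
  then show ?thesis ..
qed

lemma split_cands_edge_vec:
  fixes d :: nat and L fv :: real and x :: vec
  assumes n: "n > 0"
  defines "z \<equiv> \<lambda>j. if j = d mod n then edge_vec n d (d mod n) / 2 else 0"
    and "s \<equiv> fv - L * vnorm n (edge_vec n d)"
  shows "split_cands n L x (edge_vec n d) fv =
    {#(\<lambda>j. x j + z j, edge_vec n (Suc d), s), (\<lambda>j. x j - z j, edge_vec n (Suc d), s)#}"
  unfolding split_cands_def Let_def max_idx_edge_vec[OF n] edge_vec_Suc[OF n] z_def s_def ..

definition good_cand :: "nat \<Rightarrow> real \<Rightarrow> (vec \<Rightarrow> real) \<Rightarrow> cand \<Rightarrow> bool" where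
  "good_cand n L f c \<longleftrightarrow> (\<exists>d. fst (snd c) = edge_vec n (Suc d) \<and>
     f (proj n (fst c)) - snd (snd c) \<le> 2 * L * vnorm n (edge_vec n d) \<and>
     (\<forall>y\<in>cube n. in_box n (fst c) (fst (snd c)) y \<longrightarrow> snd (snd c) \<le> f y))"

lemma split_cands_good:
  assumes n: "n > 0" and f: "lipschitz_on_cube n L f" "L \<ge> 0"
    and c: "c \<in># split_cands n L x (edge_vec n d) (f (proj n x))"
  shows "good_cand n L f c"
proof -
  define z where "z = (\<lambda>j. if j = d mod n then edge_vec n d (d mod n) / 2 else 0)"
  define s where "s = f (proj n x) - L * vnorm n (edge_vec n d)"
  have z: "0 \<le> z i" "edge_vec n (Suc d) i = edge_vec n d i - z i" for i
    using edge_vec_nonneg[of n d] by (simp_all add: z_def edge_vec_Suc[OF n])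
  have child: "good_cand n L f (x', edge_vec n (Suc d), s)" if x': "\<And>i. \<bar>x' i - x i\<bar> = z i" for x'
    unfolding good_cand_def fst_conv snd_conv
  proof (intro exI[of _ d] conjI ballI impI refl)
    have "f (proj n x') - f (proj n x) \<le> L * vnorm n (\<lambda>i. x' i - x i)"
      by (rule lipschitz_on_cube_proj[OF f])
    also have "\<dots> \<le> L * vnorm n (edge_vec n d)"
      using f(2) z x' edge_vec_nonneg[of n "Suc d"]
      by (intro mult_left_mono vnorm_mono) (auto simp: abs_of_nonneg edge_vec_nonneg)
    finally show "f (proj n x') - s \<le> 2 * L * vnorm n (edge_vec n d)"
      by (simp add: s_def)
  next
    fix y
    assume "y \<in> cube n" and y: "in_box n x' (edge_vec n (Suc d)) y"
    have "in_box n x (edge_vec n d) y"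
      unfolding in_box_def
    proof (intro allI impI)
      fix i
      assume "i < n"
      then have "\<bar>y i - x' i\<bar> \<le> edge_vec n d i - z i"
        using y z(2) by (simp add: in_box_def)
      then show "\<bar>y i - x i\<bar> \<le> edge_vec n d i"
        using x'[of i] by linarith
    qed
    then show "s \<le> f y"
      using lipschitz_on_cube_box_lower[OF f \<open>y \<in> cube n\<close>] by (simp add: s_def)
  qed
  have "split_cands n L x (edge_vec n d) (f (proj n x)) =
      {#(\<lambda>j. x j + z j, edge_vec n (Suc d), s), (\<lambda>j. x j - z j, edge_vec n (Suc d), s)#}"
    unfolding z_def s_def by (rule split_cands_edge_vec[OF n])
  then show ?thesis
    using c child[of "\<lambda>j. x j + z j"] child[of "\<lambda>j. x j - z j"] z(1) by auto
qed

lemma split_cands_cover: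
  assumes n: "n > 0" and "in_box n x (edge_vec n d) y"
  shows "\<exists>c\<in>#split_cands n L x (edge_vec n d) fv. in_box n (fst c) (fst (snd c)) y"
  using in_box_halves[OF assms(2), of "d mod n"]
  by (auto simp: split_cands_edge_vec[OF n] edge_vec_Suc[OF n])

definition cand_count :: "nat \<Rightarrow> nat \<Rightarrow> cand multiset \<Rightarrow> nat" where
  "cand_count n k M = size (filter_mset (\<lambda>c. fst (snd c) = edge_vec n k) M)"

lemma cand_count_add_mset:
  "cand_count n k (add_mset c M) = cand_count n k M + (if fst (snd c) = edge_vec n k then 1 else 0)"
  by (simp add: cand_count_def)

lemma cand_count_union: "cand_count n k (M + N) = cand_count n k M + cand_count n k N"
  by (simp add: cand_count_def)

lemma cand_count_split_cands:
  assumes n: "n > 0"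
  shows "cand_count n k (split_cands n L x (edge_vec n d) fv) = (if k = Suc d then 2 else 0)"
  using edge_vec_inj[OF n, of "Suc d" k]
  by (auto simp: cand_count_def split_cands_edge_vec[OF n])

definition queue_inv :: "nat \<Rightarrow> real \<Rightarrow> (vec \<Rightarrow> real) \<Rightarrow> cand multiset \<Rightarrow> bool" where
  "queue_inv n L f M \<longleftrightarrow> (\<forall>c\<in>#M. good_cand n L f c) \<and>
     (\<forall>y\<in>cube n. \<exists>c\<in>#M. in_box n (fst c) (fst (snd c)) y)"

lemma cube_nonempty: "cube n \<noteq> {}"
  by (auto simp: cube_def intro!: exI[of _ "\<lambda>_. 0"])

lemma queue_inv_min_score_le_INF:
  fixes f :: "vec \<Rightarrow> real"
  assumes "queue_inv n L f M" "\<forall>c\<in>#M. s \<le> snd (snd c)"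
  shows "s \<le> (INF x\<in>cube n. f x)"
proof (rule cINF_greatest[OF cube_nonempty])
  fix y
  assume "y \<in> cube n"
  then obtain c where "c \<in># M" "in_box n (fst c) (fst (snd c)) y"
    using assms(1) by (auto simp: queue_inv_def)
  then show "s \<le> f y"
    using assms \<open>y \<in> cube n\<close> unfolding queue_inv_def good_cand_def by fastforce
qed

lemma cube_in_init_box:
  assumes n: "n > 0" and "y \<in> cube n"
  shows "in_box n (edge_vec n 0) (edge_vec n 0) y"
  using assms edge_vec_0_ge_half[OF n] edge_vec_nonneg[of n 0]
  by (fastforce simp: in_box_def cube_def abs_le_iff)

lemma queue_inv_init:
  assumes n: "n > 0" and f: "lipschitz_on_cube n L f" "L \<ge> 0"
  shows "queue_inv n L f (split_cands n L (edge_vec n 0) (edge_vec n 0) (f (proj n (edge_vec n 0))))"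
  using split_cands_good[OF n f] split_cands_cover[OF n cube_in_init_box[OF n]]
  by (auto simp: queue_inv_def)

lemma queue_inv_replace:
  assumes n: "n > 0" and f: "lipschitz_on_cube n L f" "L \<ge> 0"
    and M: "queue_inv n L f M" and c: "c \<in># M"
  shows "queue_inv n L f (M - {#c#} + split_cands n L (fst c) (fst (snd c)) (f (proj n (fst c))))"
proof -
  obtain d where d: "fst (snd c) = edge_vec n (Suc d)"
    using M c by (auto simp: queue_inv_def good_cand_def)
  define S where "S = split_cands n L (fst c) (edge_vec n (Suc d)) (f (proj n (fst c)))"
  have "\<forall>c'\<in># M - {#c#} + S. good_cand n L f c'"
    using M split_cands_good[OF n f] by (auto simp: queue_inv_def S_def dest: in_diffD)
  moreover have "\<exists>c'\<in># M - {#c#} + S. in_box n (fst c') (fst (snd c')) y" if "y \<in> cube n" for y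
  proof -
    obtain c' where c': "c' \<in># M" "in_box n (fst c') (fst (snd c')) y"
      using M \<open>y \<in> cube n\<close> by (auto simp: queue_inv_def)
    show ?thesis
    proof (cases "c' = c")
      case True
      then show ?thesis
        using split_cands_cover[OF n, of "fst c" "Suc d" y L] c'(2) d by (auto simp: S_def)
    next
      case False
      then have "c' \<in># M - {#c#}"
        using c'(1) by (simp add: in_diff_count)
      then show ?thesis
        using c'(2) by auto
    qed
  qed
  ultimately show ?thesis
    using d by (simp add: queue_inv_def S_def)
qed

lemma is_run_step:
  assumes "is_run n L f Q X" "t \<ge> 2"
  obtains s where "(fst (X t), snd (X t), s) \<in># Q (t - 1)" "\<forall>c\<in>#Q (t - 1). s \<le> snd (snd c)"
    "Q t = Q (t - 1) - {#(fst (X t), snd (X t), s)#}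
           + split_cands n L (fst (X t)) (snd (X t)) (f (proj n (fst (X t))))"
  using assms unfolding is_run_def by blast

lemma run_queue_inv:
  assumes n: "n > 0" and f: "lipschitz_on_cube n L f" "L \<ge> 0"
    and run: "is_run n L f Q X" and "t \<ge> 1"
  shows "queue_inv n L f (Q t)"
  using \<open>t \<ge> 1\<close>
proof (induction t rule: nat_induct_at_least)
  case base
  then show ?case
    using run queue_inv_init[OF n f] by (simp add: is_run_def init_vec_eq_edge_vec_0[OF n])
next
  case (Suc t)
  obtain s where "(fst (X (Suc t)), snd (X (Suc t)), s) \<in># Q t"
    and "Q (Suc t) = Q t - {#(fst (X (Suc t)), snd (X (Suc t)), s)#}
           + split_cands n L (fst (X (Suc t))) (snd (X (Suc t))) (f (proj n (fst (X (Suc t)))))"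
    using is_run_step[OF run, of "Suc t"] Suc.hyps by auto
  then show ?case
    using queue_inv_replace[OF n f Suc.IH] by (metis fst_conv snd_conv)
qed

lemma run_selected:
  assumes n: "n > 0" and f: "lipschitz_on_cube n L f" "L \<ge> 0"
    and run: "is_run n L f Q X" and t: "t \<ge> 2"
  obtains d where "snd (X t) = edge_vec n (Suc d)"
    "f (proj n (fst (X t))) - (INF x\<in>cube n. f x) \<le> 2 * L * vnorm n (edge_vec n d)"
proof -
  obtain s where mem: "(fst (X t), snd (X t), s) \<in># Q (t - 1)"
    and min: "\<forall>c\<in>#Q (t - 1). s \<le> snd (snd c)"
    using is_run_step[OF run t] .
  have M: "queue_inv n L f (Q (t - 1))"
    using run_queue_inv[OF n f run] t by simp
  then obtain d where "snd (X t) = edge_vec n (Suc d)"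
    and "f (proj n (fst (X t))) - s \<le> 2 * L * vnorm n (edge_vec n d)"
    using mem by (force simp: queue_inv_def good_cand_def)
  moreover have "s \<le> (INF x\<in>cube n. f x)"
    using queue_inv_min_score_le_INF[OF M min] .
  ultimately show ?thesis
    using that by fastforce
qed

lemma run_regret_le_side:
  assumes n: "n > 0" and f: "lipschitz_on_cube n L f" "L \<ge> 0"
    and run: "is_run n L f Q X" and t: "t \<ge> 1"
  obtains k where "snd (X t) = edge_vec n k"
    "f (proj n (fst (X t))) - (INF x\<in>cube n. f x) \<le> 2 * L * sqrt (real n) * side n k"
proof (cases "t = 1")
  case True
  have X1: "X 1 = (edge_vec n 0, edge_vec n 0)"
    using run by (simp add: is_run_def init_vec_eq_edge_vec_0[OF n])
  have "vnorm n (edge_vec n 0) \<le> sqrt (real n) * side n 1"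
    using vnorm_edge_vec_le[OF n, of 0] by simp
  also have "\<dots> \<le> sqrt (real n)"
    using side_le_iff[OF n, of 1 0] by (intro mult_left_le) auto
  finally have "L * vnorm n (edge_vec n 0) \<le> L * sqrt (real n)"
    using f(2) by (rule mult_left_mono)
  then have "f (proj n (edge_vec n 0)) - L * sqrt (real n) \<le> f y" if "y \<in> cube n" for y
    using lipschitz_on_cube_box_lower[OF f that cube_in_init_box[OF n that]] by linarith
  then have "f (proj n (edge_vec n 0)) - L * sqrt (real n) \<le> (INF x\<in>cube n. f x)"
    by (intro cINF_greatest cube_nonempty)
  moreover have "0 \<le> L * sqrt (real n)"
    using f(2) by simp
  ultimately show ?thesis
    using that[of 0] True X1 by simp
next
  case False
  then obtain d where "snd (X t) = edge_vec n (Suc d)"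
    "f (proj n (fst (X t))) - (INF x\<in>cube n. f x) \<le> 2 * L * vnorm n (edge_vec n d)"
    using run_selected[OF n f run, of t] t by force
  moreover have "2 * L * vnorm n (edge_vec n d) \<le> 2 * L * sqrt (real n) * side n (Suc d)"
    using vnorm_edge_vec_le[OF n, of d] f(2) by (simp add: mult.assoc mult_left_mono)
  ultimately show ?thesis
    using that by fastforce
qed

definition depth_count :: "nat \<Rightarrow> (nat \<Rightarrow> vec \<times> vec) \<Rightarrow> nat \<Rightarrow> nat \<Rightarrow> nat" where
  "depth_count n X k t = card {s \<in> {1..t}. snd (X s) = edge_vec n k}"

lemma depth_count_0 [simp]: "depth_count n X k 0 = 0"
  by (simp add: depth_count_def)

lemma depth_count_Suc:
  "depth_count n X k (Suc t) = depth_count n X k t + (if snd (X (Suc t)) = edge_vec n k then 1 else 0)"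
proof -
  have "{s \<in> {1..Suc t}. snd (X s) = edge_vec n k} =
      (if snd (X (Suc t)) = edge_vec n k then insert (Suc t) else id)
        {s \<in> {1..t}. snd (X s) = edge_vec n k}"
    by (auto simp: le_Suc_eq)
  then show ?thesis
    by (simp add: depth_count_def)
qed

text \<open>Every evaluation at depth \<open>k\<close> queues two candidates of depth \<open>k + 1\<close>, each of which is
  either still queued or has been evaluated.\<close>
lemma run_count_balance:
  assumes n: "n > 0" and f: "lipschitz_on_cube n L f" "L \<ge> 0"
    and run: "is_run n L f Q X" and "t \<ge> 1"
  shows "cand_count n (Suc k) (Q t) + depth_count n X (Suc k) t = 2 * depth_count n X k t"
  using \<open>t \<ge> 1\<close>
proof (induction t arbitrary: k rule: nat_induct_at_least)
  case base
  have "X 1 = (edge_vec n 0, edge_vec n 0)"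
    and "Q 1 = split_cands n L (edge_vec n 0) (edge_vec n 0) (f (proj n (edge_vec n 0)))"
    using run by (simp_all add: is_run_def init_vec_eq_edge_vec_0[OF n])
  then show ?case
    using edge_vec_inj[OF n, of 0] by (simp add: cand_count_split_cands[OF n] depth_count_Suc)
next
  case (Suc t)
  obtain s where mem: "(fst (X (Suc t)), snd (X (Suc t)), s) \<in># Q t"
    and Q: "Q (Suc t) = Q t - {#(fst (X (Suc t)), snd (X (Suc t)), s)#}
           + split_cands n L (fst (X (Suc t))) (snd (X (Suc t))) (f (proj n (fst (X (Suc t)))))"
    using is_run_step[OF run, of "Suc t"] Suc.hyps by auto
  obtain d where d: "snd (X (Suc t)) = edge_vec n (Suc d)"
    using run_selected[OF n f run, of "Suc t"] Suc.hyps by auto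
  have depth: "snd (X (Suc t)) = edge_vec n j \<longleftrightarrow> j = Suc d" for j
    using d edge_vec_inj[OF n] by auto
  define R where "R = Q t - {#(fst (X (Suc t)), snd (X (Suc t)), s)#}"
  have "Q t = add_mset (fst (X (Suc t)), snd (X (Suc t)), s) R"
    using mem by (simp add: R_def)
  then have "cand_count n (Suc k) (Q t) = cand_count n (Suc k) R + (if k = d then 1 else 0)"
    by (simp add: cand_count_add_mset depth)
  moreover have "cand_count n (Suc k) (Q (Suc t)) = cand_count n (Suc k) R + (if k = Suc d then 2 else 0)"
    unfolding Q R_def[symmetric] cand_count_union unfolding d cand_count_split_cands[OF n] by simp
  moreover have "depth_count n X j (Suc t) = depth_count n X j t + (if j = Suc d then 1 else 0)" for j
    by (simp add: depth_count_Suc depth)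
  ultimately show ?case
    using Suc.IH[of k] by (cases "k = d"; cases "k = Suc d") auto
qed

lemma run_depth_count_le:
  assumes n: "n > 0" and f: "lipschitz_on_cube n L f" "L \<ge> 0" and run: "is_run n L f Q X"
  shows "depth_count n X k T \<le> 2 ^ k"
proof (induction k)
  case 0
  have "{t \<in> {1..T}. snd (X t) = edge_vec n 0} \<subseteq> {1}"
  proof
    fix t
    assume t: "t \<in> {t \<in> {1..T}. snd (X t) = edge_vec n 0}"
    have "\<not> 2 \<le> t"
    proof
      assume "2 \<le> t"
      then obtain d where "snd (X t) = edge_vec n (Suc d)"
        using run_selected[OF n f run, of t] by blast
      then show False
        using t edge_vec_inj[OF n, of "Suc d" 0] by simp
    qed
    then show "t \<in> {1}"
      using t by simp
  qed
  then have "card {t \<in> {1..T}. snd (X t) = edge_vec n 0} \<le> card {1::nat}"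
    by (intro card_mono) auto
  then show ?case
    by (simp add: depth_count_def)
next
  case (Suc k)
  show ?case
  proof (cases "T = 0")
    case False
    then have "depth_count n X (Suc k) T \<le> 2 * depth_count n X k T"
      using run_count_balance[OF n f run, of T k] by linarith
    then show ?thesis
      using Suc.IH by simp
  qed simp
qed

text \<open>Depths up to \<open>D\<close> contribute a geometric series in \<open>2 a\<close>, dominated by its last term;
  every deeper point contributes at most \<open>a ^ (D + 1)\<close>.\<close>
lemma sum_power_le_by_counts:
  fixes a :: real and g :: "'a \<Rightarrow> nat"
  assumes A: "finite A" and a: "7 / 10 \<le> a" "a \<le> 1" and D: "2 ^ D \<le> card A"
    and counts: "\<And>k. card {t \<in> A. g t = k} \<le> 2 ^ k"
  shows "(\<Sum>t\<in>A. a ^ g t) \<le> 6 * real (card A) * a ^ D"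
proof -
  have split: "a ^ g t \<le> (\<Sum>k\<le>D. if g t = k then a ^ k else 0) + a ^ (D + 1)" for t
  proof (cases "g t \<le> D")
    case True
    then show ?thesis
      using a by (simp add: sum.delta')
  next
    case False
    then have "a ^ g t \<le> a ^ (D + 1)"
      using a by (intro power_decreasing) auto
    then show ?thesis
      using False by (simp add: sum.delta')
  qed
  have "(\<Sum>t\<in>A. a ^ g t) \<le> (\<Sum>t\<in>A. (\<Sum>k\<le>D. if g t = k then a ^ k else 0) + a ^ (D + 1))"
    by (rule sum_mono) (rule split)
  also have "\<dots> = (\<Sum>k\<le>D. \<Sum>t\<in>A. if g t = k then a ^ k else 0) + real (card A) * a ^ (D + 1)"
    unfolding sum.distrib by (subst sum.swap) simp
  also have "(\<Sum>k\<le>D. \<Sum>t\<in>A. if g t = k then a ^ k else 0) = (\<Sum>k\<le>D. real (card {t \<in> A. g t = k}) * a ^ k)"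
    using A by (simp add: sum.inter_filter[symmetric])
  also have "(\<Sum>k\<le>D. real (card {t \<in> A. g t = k}) * a ^ k) \<le> (\<Sum>k\<le>D. (2 * a) ^ k)"
  proof (rule sum_mono)
    fix k
    have "real (card {t \<in> A. g t = k}) \<le> 2 ^ k"
      using counts[of k] by (metis numeral_power_le_of_nat_cancel_iff of_nat_le_iff of_nat_numeral of_nat_power)
    then show "real (card {t \<in> A. g t = k}) * a ^ k \<le> (2 * a) ^ k"
      using a by (simp add: power_mult_distrib mult_right_mono)
  qed
  also have "(\<Sum>k\<le>D. (2 * a) ^ k) = ((2 * a) ^ Suc D - 1) / (2 * a - 1)"
    unfolding lessThan_Suc_atMost[symmetric] using a by (intro geometric_sum) simp
  also have "\<dots> \<le> (2 * a / (2 * a - 1)) * (2 * a) ^ D"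
    using a by (simp add: divide_right_mono field_simps)
  also have "\<dots> = (2 * a / (2 * a - 1)) * (2 ^ D * a ^ D)"
    by (simp add: power_mult_distrib)
  also have "\<dots> \<le> 5 * (2 ^ D * a ^ D)"
    using a by (intro mult_right_mono) (auto simp: divide_le_eq)
  also have "\<dots> \<le> 5 * (real (card A) * a ^ D)"
    using a D by (intro mult_left_mono mult_right_mono)
      (auto simp: numeral_power_le_of_nat_cancel_iff)
  also have "real (card A) * a ^ (D + 1) \<le> real (card A) * a ^ D"
    using a by (intro mult_left_mono power_decreasing) auto
  finally show ?thesis
    by simp
qed

lemma side_one_power_le_powr:
  assumes n: "n > 0" and T: "T \<ge> 1" "T < 2 ^ (D + 1)"
  shows "side n 1 ^ D \<le> 2 * real T powr (- 1 / real n)"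
proof -
  have "1 / 2 \<le> side n 1"
    using side_self[OF n] side_le_iff[OF n, of n 1] n by simp
  then have "side n 1 ^ D \<le> 2 * (side n 1 ^ D * side n 1)"
    using side_pos[of n 1] by simp
  also have "\<dots> = 2 * side n (D + 1)"
    by (simp add: side_eq_power[of n "Suc D"] mult.commute)
  also have "2 * side n (D + 1) \<le> 2 * real T powr (- 1 / real n)"
  proof -
    have "real T \<le> real (2 ^ (D + 1))"
      using less_imp_le[OF T(2)] by (simp only: of_nat_le_iff)
    then show ?thesis
      unfolding side_eq_powr using T(1) n by (intro mult_left_mono powr_mono2') auto
  qed
  finally show ?thesis
    by simp
qed

lemma run_total_regret_le:
  assumes n: "n \<ge> 2" and f: "lipschitz_on_cube n L f" "L \<ge> 0"
    and run: "is_run n L f Q X" and T: "T \<ge> 1"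
  shows "(\<Sum>t=1..T. f (proj n (fst (X t))) - (INF x\<in>cube n. f x))
    \<le> 24 * L * sqrt (real n) * real T * real T powr (- 1 / real n)"
proof -
  have n0: "n > 0"
    using n by simp
  have "\<forall>t\<in>{1..T}. \<exists>k. snd (X t) = edge_vec n k \<and>
      f (proj n (fst (X t))) - (INF x\<in>cube n. f x) \<le> 2 * L * sqrt (real n) * side n k"
    using run_regret_le_side[OF n0 f run] by (metis atLeastAtMost_iff)
  then obtain g where g: "\<And>t. t \<in> {1..T} \<Longrightarrow> snd (X t) = edge_vec n (g t)"
    "\<And>t. t \<in> {1..T} \<Longrightarrow>
       f (proj n (fst (X t))) - (INF x\<in>cube n. f x) \<le> 2 * L * sqrt (real n) * side n (g t)"
    by metis
  have counts: "card {t \<in> {1..T}. g t = k} \<le> 2 ^ k" for k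
  proof -
    have "{t \<in> {1..T}. g t = k} = {t \<in> {1..T}. snd (X t) = edge_vec n k}"
      using g(1) edge_vec_inj[OF n0] by auto
    then show ?thesis
      using run_depth_count_le[OF n0 f run, of k T] by (simp add: depth_count_def)
  qed
  obtain D where D: "2 ^ D \<le> T" "T < 2 ^ (D + 1)"
    using ex_power_ivl1[of 2 T] T by auto
  have "(\<Sum>t=1..T. f (proj n (fst (X t))) - (INF x\<in>cube n. f x))
      \<le> (\<Sum>t=1..T. 2 * L * sqrt (real n) * side n 1 ^ g t)"
    using g(2) by (intro sum_mono) (metis side_eq_power)
  also have "\<dots> = 2 * L * sqrt (real n) * (\<Sum>t=1..T. side n 1 ^ g t)"
    by (simp add: sum_distrib_left)
  also have "\<dots> \<le> 2 * L * sqrt (real n) * (6 * real T * side n 1 ^ D)"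
    using sum_power_le_by_counts[of "{1..T}" "side n 1" D g] side_one_ge[OF n]
      side_le_iff[OF n0, of 1 0] counts D(1) f(2)
    by (intro mult_left_mono) auto
  also have "\<dots> \<le> 2 * L * sqrt (real n) * (6 * real T * (2 * real T powr (- 1 / real n)))"
    using side_one_power_le_powr[OF n0 T D(2)] f(2) by (intro mult_left_mono) auto
  finally show ?thesis
    by (simp add: algebra_simps)
qed

theorem theorem1:
  shows "\<exists>C>0. \<forall>n\<ge>2. \<forall>L>0. \<forall>(f :: vec \<Rightarrow> real) Q X.
     (\<forall>x\<in>cube n. \<forall>y\<in>cube n. \<bar>f x - f y\<bar> \<le> L * vnorm n (\<lambda>i. x i - y i)) \<longrightarrow>
     is_run n L f Q X \<longrightarrow>
     (\<forall>T\<ge>1. (1 / real T) * (\<Sum>t=1..T. f (proj n (fst (X t)))) - (INF x\<in>cube n. f x)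
              \<le> C * L * sqrt (real n) * real T powr (- 1 / real n))"
proof (intro exI[of _ 24] conjI allI impI)
  fix n :: nat and L :: real and f :: "vec \<Rightarrow> real" and Q X and T :: nat
  assume n: "2 \<le> n" and L: "0 < L"
    and f: "\<forall>x\<in>cube n. \<forall>y\<in>cube n. \<bar>f x - f y\<bar> \<le> L * vnorm n (\<lambda>i. x i - y i)"
    and run: "is_run n L f Q X" and T: "1 \<le> T"
  have "(1 / real T) * (\<Sum>t=1..T. f (proj n (fst (X t)))) - (INF x\<in>cube n. f x)
      = (\<Sum>t=1..T. f (proj n (fst (X t))) - (INF x\<in>cube n. f x)) / real T"
    using T by (simp add: sum_subtractf field_simps)
  also have "\<dots> \<le> 24 * L * sqrt (real n) * real T powr (- 1 / real n)"
    using run_total_regret_le[OF n _ _ run T] f L T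
    by (simp add: lipschitz_on_cube_def divide_le_eq algebra_simps)
  finally show "(1 / real T) * (\<Sum>t=1..T. f (proj n (fst (X t)))) - (INF x\<in>cube n. f x)
      \<le> 24 * L * sqrt (real n) * real T powr (- 1 / real n)" .
qed simp

end
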